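(* Assume conditions (i), (ii), (iv), (v) of Assumption A. Then there exists a constant $C$ such that for all sufficiently small $h>0$ and all $x\in\mathbb{R}$, \[ h^{\alpha}L(1/h)|K_n(x)|+h^{\alpha+1}L(1/h)|xK_n(x)|\le C\min(1,1/x^2). \]
   Context: Model: $\nu=\alpha F$ is the Lévy measure of a compound Poisson subordinator with intensity $\alpha$ and positive jump distribution $F$; $k(x)=\nu((x,\infty))$ for $x\ge0$, $k(x)=0$ for $x<0$; $\varphi(t)=\exp\big(\int_0^\infty(e^{itx}-1)\frac{k(x)}{x}dx\big)$ is the characteristic function of the stationary distribution of the OU process $dX_t=-\lambda X_tdt+dJ_{\lambda t}$; $\varphi_k(u)=\int_0^\infty e^{iux}k(x)dx$. $W$ is a kernel with Fourier transform $\varphi_W(u)=\int e^{iux}W(x)dx$; $h>0$ a bandwidth; $K_n(x)=\frac1{2\pi}\int_{\mathbb{R}}e^{-itx}\frac{\varphi_W(t)}{\varphi(t/h)}dt$. Conditions: (i) $\int_0^\infty(1\vee|x|^{2+\epsilon})k(x)dx<\infty$ for some $\epsilon>0$. (ii) $k(0)=\alpha$ with $2<\alpha<\infty$. (iv) $|\varphi_k(u)|\lesssim(1+|u|)^{-1}$, $|\varphi_k'(u)|\vee|\varphi_k''(u)|\lesssim(1+|u|)^{-2}$. (v) $W$ integrable, $\int W=1$, $\int|x|^{p+1}|W|<\infty$, $\int x^\ell W(x)dx=0$ for $\ell=1,\dots,p$ (for some integer $p\ge0$), $\varphi_W(u)=0$ for $|u|>1$, $\varphi_W$ three times continuously differentiable.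 Slowly varying factor: under (ii) there exist a function $L:(1,\infty)\to[0,\infty)$ slowly varying at $\infty$ and a constant $B>0$ with $\lim_{|t|\to\infty}|t|^\alpha|\varphi(t)|/L(|t|)=B$; $L$ and $B$ denote such a fixed pair. *)

theory Defs
  imports "HOL-Probability.Probability"
begin

text \<open>Tail function k(x) = nu((x,oo)) of the Levy measure nu = alpha F (k(x) = 0 for x < 0).\<close>
definition kfun :: "real \<Rightarrow> real measure \<Rightarrow> real \<Rightarrow> real" where
  "kfun \<alpha> F x = (if x < 0 then 0 else \<alpha> * measure F {x<..})"

text \<open>Characteristic function of the stationary distribution of the OU process.\<close>
definition phi :: "(real \<Rightarrow> real) \<Rightarrow> real \<Rightarrow> complex" where
  "phi k t = exp (LINT x:{0<..}|lborel.
       (exp (\<i> * complex_of_real (t * x)) - 1) * complex_of_real (k x / x))"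

definition phik :: "(real \<Rightarrow> real) \<Rightarrow> real \<Rightarrow> complex" where
  "phik k u = (LINT x:{0<..}|lborel. exp (\<i> * complex_of_real (u * x)) * complex_of_real (k x))"

definition ftW :: "(real \<Rightarrow> real) \<Rightarrow> real \<Rightarrow> complex" where
  "ftW W u = (LINT x|lborel. exp (\<i> * complex_of_real (u * x)) * complex_of_real (W x))"

definition Kn :: "(real \<Rightarrow> real) \<Rightarrow> (real \<Rightarrow> real) \<Rightarrow> real \<Rightarrow> real \<Rightarrow> complex" where
  "Kn W k h x = complex_of_real (1 / (2 * pi)) *
     (LINT t|lborel. exp (- \<i> * complex_of_real (t * x)) * ftW W t / phi k (t / h))"

definition slowly_varying :: "(real \<Rightarrow> real) \<Rightarrow> bool" where
  "slowly_varying L \<longleftrightarrow> (\<forall>c>0. ((\<lambda>x. L (c * x) / L x) \<longlongrightarrow> 1) at_top)"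

end

theory Submission
  imports Defs
begin

text \<open>
  Write \<open>K\<^sub>n(x) = (2\<pi>)\<^sup>-\<^sup>1 \<integral>[-1,1] e^(-itx) g(t) dt\<close> with \<open>g(t) = \<phi>\<^sub>W(t) / \<phi>(t/h)\<close>. Since \<open>\<phi>\<^sub>W\<close> and its
  derivatives vanish at \<open>\<plusminus>1\<close>, integration by parts shows that \<open>(ix)^j K\<^sub>n(x)\<close> is the same integral
  with \<open>g\<close> replaced by its \<open>j\<close>-th derivative, \<open>j \<le> 3\<close>. As \<open>\<phi> = exp \<psi>\<close> with \<open>\<psi>' = i \<phi>\<^sub>k\<close>, Leibniz' rule
  writes \<open>g^(j)(t)\<close> as \<open>1/\<phi>(t/h)\<close> times a polynomial in the derivatives of \<open>\<phi>\<^sub>W\<close> and of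
  \<open>\<phi>\<^sub>k(t/h)/h\<close>, which condition (iv) bounds by a multiple of \<open>(h + \<bar>t\<bar>)^(-2)\<close> (of \<open>h^(-1) (h + \<bar>t\<bar>)^(-2)\<close>
  for \<open>j = 3\<close>). Regular variation of \<open>\<bar>\<phi>\<bar>\<close> with index \<open>-\<alpha> < -2\<close> gives, via a Potter bound,
  \<open>\<bar>\<phi>(1/h)\<bar> / \<bar>\<phi>(t/h)\<bar> \<le> K (h + \<bar>t\<bar>)^2\<close> on \<open>[-1, 1]\<close>, while \<open>h^\<alpha> L(1/h) \<le> 2 \<bar>\<phi>(1/h)\<bar> / B\<close> for small \<open>h\<close>.
  Hence \<open>j = 0\<close> gives the bound for \<open>\<bar>x\<bar> \<le> 1\<close>, and \<open>j = 2, 3\<close> give the decay \<open>x^(-2)\<close> for \<open>\<bar>x\<bar> > 1\<close>.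
\<close>

section \<open>Differentiating Fourier integrals\<close>

lemma cmod_iexp_diff_le: "cmod (iexp a - iexp b) \<le> \<bar>a - b\<bar>"
proof -
  have "iexp a - iexp b = iexp b * (iexp (a - b) - 1)"
    by (simp add: algebra_simps exp_diff[symmetric] exp_add[symmetric])
  then have "cmod (iexp a - iexp b) = cmod (iexp (a - b) - 1)"
    by (simp add: norm_mult)
  also have "\<dots> \<le> \<bar>a - b\<bar>"
    using iexp_approx1[of "a - b" 0] by simp
  finally show ?thesis .
qed

lemma has_vector_derivative_if_difference_quotient_tendsto:
  fixes f :: "real \<Rightarrow> complex"
  assumes "((\<lambda>y. (f y - f t) / complex_of_real (y - t)) \<longlongrightarrow> D) (at t)"
  shows "(f has_vector_derivative D) (at t)"
proof -
  have "((\<lambda>y. Re ((f y - f t) / complex_of_real (y - t))) \<longlongrightarrow> Re D) (at t)"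
       "((\<lambda>y. Im ((f y - f t) / complex_of_real (y - t))) \<longlongrightarrow> Im D) (at t)"
    using tendsto_Re[OF assms] tendsto_Im[OF assms] .
  then show ?thesis
    unfolding has_vector_derivative_complex_iff has_field_derivative_iff
    by (simp add: Re_divide_of_real Im_divide_of_real)
qed

lemma integrable_iexp_minus_one_mult:
  fixes a :: "real \<Rightarrow> complex"
  assumes a: "a \<in> borel_measurable lborel" and xa: "integrable lborel (\<lambda>x. complex_of_real x * a x)"
  shows "integrable lborel (\<lambda>x. (iexp (s * x) - 1) * a x)"
proof (rule Bochner_Integration.integrable_bound[OF integrable_mult_right[OF xa, of "complex_of_real s"]])
  show "(\<lambda>x. (iexp (s * x) - 1) * a x) \<in> borel_measurable lborel"
    using a by measurable
  have "cmod ((iexp (s * x) - 1) * a x) \<le> cmod (complex_of_real s * (complex_of_real x * a x))" for x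
    using mult_right_mono[OF cmod_iexp_diff_le[of "s * x" 0] norm_ge_zero[of "a x"]]
    by (simp add: norm_mult abs_mult mult.assoc)
  then show "AE x in lborel. norm ((iexp (s * x) - 1) * a x)
      \<le> norm (complex_of_real s * (complex_of_real x * a x))"
    by simp
qed

lemma norm_iexp_difference_quotient_le:
  assumes "s \<noteq> t"
  shows "cmod ((iexp (s * x) - iexp (t * x)) / complex_of_real (s - t)) \<le> \<bar>x\<bar>"
proof -
  have "cmod (iexp (s * x) - iexp (t * x)) \<le> \<bar>s - t\<bar> * \<bar>x\<bar>"
    using cmod_iexp_diff_le[of "s * x" "t * x"] by (simp add: abs_mult[symmetric] algebra_simps)
  then show ?thesis
    using assms by (simp add: norm_divide divide_le_eq mult.commute del: of_real_diff add: of_real_diff[symmetric])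
qed

lemma iexp_difference_quotient_tendsto:
  assumes "\<And>i. X i \<noteq> t" and "X \<longlonglongrightarrow> t"
  shows "(\<lambda>i. (iexp (X i * x) - iexp (t * x)) / complex_of_real (X i - t)) \<longlonglongrightarrow> \<i> * complex_of_real x * iexp (t * x)"
proof -
  have "((\<lambda>z. exp (\<i> * z * complex_of_real x)) has_field_derivative
      \<i> * complex_of_real x * exp (\<i> * complex_of_real t * complex_of_real x)) (at (complex_of_real t))"
    by (auto intro!: derivative_eq_intros simp: algebra_simps)
  then have "((\<lambda>z. (exp (\<i> * z * complex_of_real x) - exp (\<i> * complex_of_real t * complex_of_real x))
      / (z - complex_of_real t)) \<longlongrightarrow> \<i> * complex_of_real x * iexp (t * x)) (at (complex_of_real t))"
    unfolding has_field_derivative_iff by (simp add: mult.assoc)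
  moreover have "(\<lambda>i. complex_of_real (X i)) \<longlonglongrightarrow> complex_of_real t"
    using assms(2) by (rule tendsto_of_real)
  ultimately show ?thesis
    using assms(1) unfolding tendsto_at_iff_sequentially by (force simp: o_def mult.assoc)
qed

text \<open>The difference quotients of the integrand are dominated by \<open>\<bar>x a(x)\<bar>\<close> because \<open>iexp\<close> is
  1-Lipschitz.\<close>

lemma has_vector_derivative_integral_iexp_minus_one:
  fixes a :: "real \<Rightarrow> complex"
  assumes a: "a \<in> borel_measurable lborel" and xa: "integrable lborel (\<lambda>x. complex_of_real x * a x)"
  shows "((\<lambda>t. LINT x|lborel. (iexp (t * x) - 1) * a x) has_vector_derivative
           (LINT x|lborel. \<i> * complex_of_real x * iexp (t * x) * a x)) (at t)"
proof (rule has_vector_derivative_if_difference_quotient_tendsto)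
  define F where "F t = (LINT x|lborel. (iexp (t * x) - 1) * a x)" for t
  let ?D = "LINT x|lborel. \<i> * complex_of_real x * iexp (t * x) * a x"
  show "((\<lambda>y. (F y - F t) / complex_of_real (y - t)) \<longlongrightarrow> ?D) (at t)"
    unfolding tendsto_at_iff_sequentially o_def
  proof (intro allI impI)
    fix X :: "nat \<Rightarrow> real" assume X: "\<forall>i. X i \<in> UNIV - {t}" and Xt: "X \<longlonglongrightarrow> t"
    define s where "s i x = (iexp (X i * x) - iexp (t * x)) / complex_of_real (X i - t) * a x" for i x
    have "(F (X i) - F t) / complex_of_real (X i - t) = (LINT x|lborel. s i x)" for i
    proof -
      have "F (X i) - F t = (LINT x|lborel. (iexp (X i * x) - 1) * a x - (iexp (t * x) - 1) * a x)"
        unfolding F_def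
        by (rule Bochner_Integration.integral_diff[symmetric,
              OF integrable_iexp_minus_one_mult[OF a xa] integrable_iexp_minus_one_mult[OF a xa]])
      also have "\<dots> = (LINT x|lborel. (iexp (X i * x) - iexp (t * x)) * a x)"
        by (rule Bochner_Integration.integral_cong) (auto simp: algebra_simps)
      finally have "(F (X i) - F t) / complex_of_real (X i - t)
          = (LINT x|lborel. (iexp (X i * x) - iexp (t * x)) * a x / complex_of_real (X i - t))"
        by (simp only: integral_divide_zero)
      also have "\<dots> = (LINT x|lborel. s i x)"
        unfolding s_def by (rule Bochner_Integration.integral_cong) (simp_all add: divide_inverse ac_simps)
      finally show ?thesis .
    qed
    moreover have "(\<lambda>i. LINT x|lborel. s i x) \<longlonglongrightarrow> ?D"
    proof (rule integral_dominated_convergence[where w = "\<lambda>x. norm (complex_of_real x * a x)"])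
      show "(\<lambda>x. \<i> * complex_of_real x * iexp (t * x) * a x) \<in> borel_measurable lborel"
        "s i \<in> borel_measurable lborel" for i
        unfolding s_def using a by measurable
      show "integrable lborel (\<lambda>x. norm (complex_of_real x * a x))"
        using xa by auto
      show "AE x in lborel. norm (s i x) \<le> norm (complex_of_real x * a x)" for i
      proof (rule AE_I2)
        fix x
        have "X i \<noteq> t"
          using X by auto
        from mult_right_mono[OF norm_iexp_difference_quotient_le[OF this] norm_ge_zero[of "a x"]]
        show "norm (s i x) \<le> norm (complex_of_real x * a x)"
          unfolding s_def norm_mult by simp
      qed
      have "\<And>i. X i \<noteq> t"
        using X by auto
      from tendsto_mult_right[OF iexp_difference_quotient_tendsto[OF this Xt]]
      show "AE x in lborel. (\<lambda>i. s i x) \<longlonglongrightarrow> \<i> * complex_of_real x * iexp (t * x) * a x"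
        unfolding s_def by simp
    qed
    ultimately show "(\<lambda>i. (F (X i) - F t) / complex_of_real (X i - t)) \<longlonglongrightarrow> ?D"
      by simp
  qed
qed

lemma has_vector_derivative_set_integral_iexp_minus_one:
  fixes b :: "real \<Rightarrow> complex"
  assumes A: "A \<in> sets borel" and b: "b \<in> borel_measurable borel"
    and xb: "set_integrable lborel A (\<lambda>x. complex_of_real x * b x)"
  shows "((\<lambda>t. LINT x:A|lborel. (iexp (t * x) - 1) * b x) has_vector_derivative
           (LINT x:A|lborel. \<i> * complex_of_real x * iexp (t * x) * b x)) (at t)"
proof -
  define a where "a x = indicator A x *\<^sub>R b x" for x
  have "a \<in> borel_measurable lborel"
    unfolding a_def using A b by measurable
  moreover have "integrable lborel (\<lambda>x. complex_of_real x * a x)"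
    using xb unfolding set_integrable_def a_def
    by (rule Bochner_Integration.integrable_cong[THEN iffD1, rotated 2]) (auto simp: indicator_def)
  moreover have "(LINT x:A|lborel. (iexp (t * x) - 1) * b x)
      = (LINT x|lborel. (iexp (t * x) - 1) * a x)" for t
    unfolding set_lebesgue_integral_def a_def
    by (rule Bochner_Integration.integral_cong) (auto simp: indicator_def)
  moreover have "(LINT x:A|lborel. \<i> * complex_of_real x * iexp (t * x) * b x)
      = (LINT x|lborel. \<i> * complex_of_real x * iexp (t * x) * a x)"
    unfolding set_lebesgue_integral_def a_def
    by (rule Bochner_Integration.integral_cong) (auto simp: indicator_def)
  ultimately show ?thesis
    using has_vector_derivative_integral_iexp_minus_one[of a] by presburger
qed

lemma has_vector_derivative_set_integral_iexp:
  fixes b :: "real \<Rightarrow> complex"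
  assumes A: "A \<in> sets borel" and b: "b \<in> borel_measurable borel"
    and ib: "set_integrable lborel A b" and xb: "set_integrable lborel A (\<lambda>x. complex_of_real x * b x)"
  shows "((\<lambda>t. LINT x:A|lborel. iexp (t * x) * b x) has_vector_derivative
           (LINT x:A|lborel. \<i> * complex_of_real x * iexp (t * x) * b x)) (at t)"
proof -
  have i1: "set_integrable lborel A (\<lambda>x. (iexp (s * x) - 1) * b x)" for s
  proof (rule set_integrable_bound[OF set_integrable_mult_right[OF ib, of 2]])
    show "set_borel_measurable lborel A (\<lambda>x. (iexp (s * x) - 1) * b x)"
      unfolding set_borel_measurable_def using A b by measurable
    have "cmod (iexp (s * x) - 1) \<le> 2" for x
      using norm_triangle_ineq4[of "iexp (s * x)" 1] by simp
    then have "norm ((iexp (s * x) - 1) * b x) \<le> norm (2 * b x)" for x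
      using mult_right_mono[OF _ norm_ge_zero[of "b x"]] by (simp add: norm_mult del: of_real_mult)
    then show "AE x in lborel. x \<in> A \<longrightarrow> norm ((iexp (s * x) - 1) * b x) \<le> norm (2 * b x)"
      by simp
  qed
  have "(LINT x:A|lborel. iexp (t * x) * b x)
     = (LINT x:A|lborel. (iexp (t * x) - 1) * b x) + (LINT x:A|lborel. b x)" for t
  proof -
    have "(LINT x:A|lborel. (iexp (t * x) - 1) * b x) + (LINT x:A|lborel. b x)
        = (LINT x:A|lborel. (iexp (t * x) - 1) * b x + b x)"
      by (rule set_integral_add(2)[symmetric, OF i1 ib])
    then show ?thesis
      by (simp add: algebra_simps)
  qed
  then show ?thesis
    by (simp only: has_vector_derivative_add_const
        has_vector_derivative_set_integral_iexp_minus_one[OF A b xb])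
qed

section \<open>The characteristic exponent of the stationary law\<close>

definition char_exponent :: "(real \<Rightarrow> real) \<Rightarrow> real \<Rightarrow> complex" where
  "char_exponent k t = (LINT x:{0<..}|lborel. (iexp (t * x) - 1) * complex_of_real (k x / x))"

definition phik' :: "(real \<Rightarrow> real) \<Rightarrow> real \<Rightarrow> complex" where
  "phik' k u = (LINT x:{0<..}|lborel. \<i> * complex_of_real x * iexp (u * x) * complex_of_real (k x))"

definition phik'' :: "(real \<Rightarrow> real) \<Rightarrow> real \<Rightarrow> complex" where
  "phik'' k u = (LINT x:{0<..}|lborel.
     \<i> * complex_of_real x * iexp (u * x) * (\<i> * complex_of_real x * complex_of_real (k x)))"

lemma phi_eq_exp_char_exponent: "phi k t = exp (char_exponent k t)"
  unfolding phi_def char_exponent_def by simp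

lemma norm_phi: "cmod (phi k t) = exp (Re (char_exponent k t))"
  unfolding phi_eq_exp_char_exponent by (rule norm_exp_eq_Re)

lemma char_exponent_0 [simp]: "char_exponent k 0 = 0"
  unfolding char_exponent_def by simp

lemma char_exponent_uminus: "char_exponent k (- t) = cnj (char_exponent k t)"
proof -
  have iexp_uminus: "iexp (- t * x) = cnj (iexp (t * x))" for x
    by (simp add: exp_cnj)
  have "char_exponent k (- t) = (LINT x|lborel.
      cnj (indicator {0<..} x *\<^sub>R ((iexp (t * x) - 1) * complex_of_real (k x / x))))"
    unfolding char_exponent_def set_lebesgue_integral_def
    by (rule Bochner_Integration.integral_cong) (simp_all only: iexp_uminus, simp)
  also have "\<dots> = cnj (char_exponent k t)"
    unfolding char_exponent_def set_lebesgue_integral_def by (rule Bochner_Integration.integral_cnj)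
  finally show ?thesis .
qed

lemma Re_char_exponent_abs: "Re (char_exponent k \<bar>t\<bar>) = Re (char_exponent k t)"
proof (cases "t \<ge> 0")
  case False
  then have "\<bar>t\<bar> = - t" by simp
  then show ?thesis by (simp add: char_exponent_uminus)
qed simp

lemma set_integrable_of_real:
  "set_integrable M A f \<Longrightarrow> set_integrable M A (\<lambda>x. complex_of_real (f x))"
  unfolding set_integrable_def
  by (rule Bochner_Integration.integrable_cong[THEN iffD1, OF refl _ integrable_of_real])
     (auto simp: indicator_def)

lemma power_le_max_one_powr:
  fixes x e :: real
  assumes "0 < x" "0 < e" "j \<le> 2"
  shows "x ^ j \<le> max 1 (\<bar>x\<bar> powr (2 + e))"
proof (cases "x \<le> 1")
  case True
  then have "x ^ j \<le> 1"
    using assms by (simp add: power_le_one)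
  then show ?thesis
    by simp
next
  case False
  then have "x ^ j \<le> x powr 2"
    using assms by (simp add: powr_realpow power_increasing)
  also have "\<dots> \<le> x powr (2 + e)"
    using False assms by (intro powr_mono) auto
  finally show ?thesis
    using assms by simp
qed

lemma set_integrable_power_le_2:
  fixes k :: "real \<Rightarrow> real"
  assumes k: "k \<in> borel_measurable borel" "\<And>x. 0 \<le> k x" and "0 < e" "j \<le> 2"
    and moment: "set_integrable lborel {0<..} (\<lambda>x. max 1 (\<bar>x\<bar> powr (2 + e)) * k x)"
  shows "set_integrable lborel {0<..} (\<lambda>x. x ^ j * k x)"
proof (rule set_integrable_bound[OF moment])
  show "set_borel_measurable lborel {0<..} (\<lambda>x. x ^ j * k x)"
    unfolding set_borel_measurable_def using k by measurable
  have "x ^ j * k x \<le> max 1 (\<bar>x\<bar> powr (2 + e)) * k x" if "0 < x" for x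
    using power_le_max_one_powr[of x e j] that assms by (intro mult_right_mono) auto
  then show "AE x in lborel. x \<in> {0<..} \<longrightarrow>
      norm (x ^ j * k x) \<le> norm (max 1 (\<bar>x\<bar> powr (2 + e)) * k x)"
    using k(2) by simp
qed

lemma borel_measurable_kfun:
  assumes "finite_measure F" "sets F = sets borel"
  shows "kfun \<alpha> F \<in> borel_measurable borel"
proof -
  interpret finite_measure F by fact
  have "antimono (\<lambda>x. measure F {x<..})"
    using assms(2) by (intro antimonoI finite_measure_mono) auto
  then have "(\<lambda>x. - measure F {x<..}) \<in> borel_measurable borel"
    by (intro borel_measurable_mono) (simp add: antimono_def monoI)
  then have "(\<lambda>x. measure F {x<..}) \<in> borel_measurable borel"
    using borel_measurable_uminus by fastforce
  then show ?thesis
    unfolding kfun_def by measurable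
qed

locale tail_moments =
  fixes k :: "real \<Rightarrow> real"
  assumes borel_measurable_k: "k \<in> borel_measurable borel"
    and set_integrable_power_k: "\<And>j. j \<le> 2 \<Longrightarrow> set_integrable lborel {0<..} (\<lambda>x. x ^ j * k x)"
begin

lemma char_exponent_has_vector_derivative:
  "(char_exponent k has_vector_derivative \<i> * phik k t) (at t)"
proof -
  have "set_integrable lborel {0<..} (\<lambda>x. complex_of_real (x ^ 0 * k x))"
    by (rule set_integrable_of_real[OF set_integrable_power_k]) simp
  moreover have "set_integrable lborel {0<..} (\<lambda>x. complex_of_real (x ^ 0 * k x))
      = set_integrable lborel {0<..} (\<lambda>x. complex_of_real x * complex_of_real (k x / x))"
    by (rule set_integrable_cong) auto
  ultimately have "set_integrable lborel {0<..} (\<lambda>x. complex_of_real x * complex_of_real (k x / x))"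
    by simp
  moreover have "(LINT x:{0<..}|lborel. \<i> * complex_of_real x * iexp (t * x) * complex_of_real (k x / x))
      = \<i> * phik k t"
    unfolding phik_def set_integral_mult_right[symmetric]
    by (rule set_lebesgue_integral_cong) auto
  ultimately show ?thesis
    using has_vector_derivative_set_integral_iexp_minus_one[of "{0<..}" "\<lambda>x. complex_of_real (k x / x)" t]
      borel_measurable_k
    unfolding char_exponent_def[abs_def] by simp
qed

lemma phik_has_vector_derivative: "(phik k has_vector_derivative phik' k u) (at u)"
  using has_vector_derivative_set_integral_iexp[of "{0<..}" "\<lambda>x. complex_of_real (k x)" u]
    borel_measurable_k set_integrable_of_real[OF set_integrable_power_k[of 0]]
    set_integrable_of_real[OF set_integrable_power_k[of 1]]
  unfolding phik_def[abs_def] phik'_def by simp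

lemma phik'_has_vector_derivative: "(phik' k has_vector_derivative phik'' k u) (at u)"
proof -
  have "set_integrable lborel {0<..} (\<lambda>x. \<i> * complex_of_real x * complex_of_real (k x))"
    using set_integrable_mult_right[OF set_integrable_of_real[OF set_integrable_power_k[of 1]], of \<i>]
    by (simp add: mult.assoc)
  moreover have "set_integrable lborel {0<..}
      (\<lambda>x. complex_of_real x * (\<i> * complex_of_real x * complex_of_real (k x)))"
    using set_integrable_mult_right[OF set_integrable_of_real[OF set_integrable_power_k[of 2]], of \<i>]
    by (simp add: power2_eq_square ac_simps)
  moreover have "phik' k = (\<lambda>u. LINT x:{0<..}|lborel.
      iexp (u * x) * (\<i> * complex_of_real x * complex_of_real (k x)))"
    unfolding phik'_def by (intro ext set_lebesgue_integral_cong) (auto simp: ac_simps)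
  ultimately show ?thesis
    using has_vector_derivative_set_integral_iexp[of "{0<..}"
        "\<lambda>x. \<i> * complex_of_real x * complex_of_real (k x)" u] borel_measurable_k
    unfolding phik''_def by simp
qed

lemma vector_derivative_phik: "vector_derivative (phik k) (at u) = phik' k u"
  by (rule vector_derivative_at[OF phik_has_vector_derivative])

lemma vector_derivative_vector_derivative_phik:
  "vector_derivative (\<lambda>v. vector_derivative (phik k) (at v)) (at u) = phik'' k u"
  unfolding vector_derivative_phik by (rule vector_derivative_at[OF phik'_has_vector_derivative])

end

locale tail_Fourier_bounds = tail_moments +
  fixes c :: real
  assumes norm_phik_le: "\<And>u. cmod (phik k u) \<le> c / (1 + \<bar>u\<bar>)"
    and norm_phik'_le: "\<And>u. cmod (phik' k u) \<le> c / (1 + \<bar>u\<bar>)\<^sup>2"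
    and norm_phik''_le: "\<And>u. cmod (phik'' k u) \<le> c / (1 + \<bar>u\<bar>)\<^sup>2"
begin

lemma c_nonneg: "0 \<le> c"
proof -
  have "cmod (phik k 0) \<le> c"
    using norm_phik_le[of 0] by simp
  then show ?thesis
    by (rule order_trans[OF norm_ge_zero])
qed

lemma Re_char_exponent_has_real_derivative:
  "((\<lambda>x. Re (char_exponent k x)) has_real_derivative Re (\<i> * phik k t)) (at t)"
  using char_exponent_has_vector_derivative[of t] unfolding has_vector_derivative_complex_iff by simp

lemma abs_Re_i_phik_le: "\<bar>Re (\<i> * phik k t)\<bar> \<le> c / (1 + \<bar>t\<bar>)"
  using abs_Re_le_cmod[of "\<i> * phik k t"] norm_phik_le[of t] by (simp add: norm_mult)

lemma Re_char_exponent_lipschitz: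
  "\<bar>Re (char_exponent k y) - Re (char_exponent k x)\<bar> \<le> c * \<bar>y - x\<bar>"
proof -
  have "\<bar>Re (\<i> * phik k t)\<bar> \<le> c" for t
  proof -
    have "c / (1 + \<bar>t\<bar>) \<le> c / 1"
      using c_nonneg by (intro divide_left_mono) auto
    then show ?thesis
      using abs_Re_i_phik_le[of t] by simp
  qed
  then show ?thesis
    using field_differentiable_bound[of UNIV "\<lambda>x. Re (char_exponent k x)" "\<lambda>t. Re (\<i> * phik k t)" c y x]
      Re_char_exponent_has_real_derivative by simp
qed

lemma abs_Re_char_exponent_le: "\<bar>Re (char_exponent k v)\<bar> \<le> c * \<bar>v\<bar>"
  using Re_char_exponent_lipschitz[of v 0] by simp

text \<open>On the logarithmic scale the Lipschitz constant stays \<open>c\<close>, since \<open>\<bar>\<phi>\<^sub>k(u)\<bar> \<le> c / (1 + u)\<close>.\<close>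

lemma Re_char_exponent_log_lipschitz:
  assumes "0 < x" "0 < y"
  shows "\<bar>Re (char_exponent k y) - Re (char_exponent k x)\<bar> \<le> c * \<bar>ln y - ln x\<bar>"
proof -
  have "((\<lambda>s. Re (char_exponent k (exp s))) has_real_derivative Re (\<i> * phik k (exp s)) * exp s) (at s)" for s
    by (rule DERIV_chain2[OF Re_char_exponent_has_real_derivative DERIV_exp])
  moreover have "norm (Re (\<i> * phik k (exp s)) * exp s) \<le> c" for s
  proof -
    have "\<bar>Re (\<i> * phik k (exp s))\<bar> * exp s \<le> c / (1 + exp s) * exp s"
      using abs_Re_i_phik_le[of "exp s"] by (intro mult_right_mono) simp_all
    also have "\<dots> = c * (exp s / (1 + exp s))"
      by simp
    also have "\<dots> \<le> c"
      using c_nonneg by (intro mult_left_le) (simp_all add: add_pos_pos)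
    finally show ?thesis by (simp add: abs_mult)
  qed
  ultimately show ?thesis
    using field_differentiable_bound[of UNIV "\<lambda>s. Re (char_exponent k (exp s))"
        "\<lambda>s. Re (\<i> * phik k (exp s)) * exp s" c "ln y" "ln x"] assms by simp
qed

end

section \<open>Regular variation of \<open>\<bar>\<phi>\<bar>\<close>\<close>

locale regularly_varying_phi = tail_Fourier_bounds +
  fixes \<alpha> :: real and L :: "real \<Rightarrow> real" and B :: real
  assumes alpha_gt_2: "2 < \<alpha>"
    and L_nonneg: "\<And>t. 1 < t \<Longrightarrow> 0 \<le> L t"
    and slowly_varying_L: "slowly_varying L"
    and B_pos: "0 < B"
    and phi_asymptotics: "((\<lambda>t. \<bar>t\<bar> powr \<alpha> * cmod (phi k t) / L \<bar>t\<bar>) \<longlongrightarrow> B) at_infinity"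
begin

text \<open>\<open>ell v = ln (v powr \<alpha> * \<bar>\<phi>(v)\<bar>)\<close> for \<open>v > 0\<close>; the asymptotics of \<open>\<phi>\<close> make it the logarithm
  of a slowly varying function, up to a convergent factor.\<close>

definition ell :: "real \<Rightarrow> real" where
  "ell v = \<alpha> * ln v + Re (char_exponent k v)"

lemma ell_log_lipschitz:
  assumes "0 < u" "0 < v"
  shows "\<bar>ell v - ell u\<bar> \<le> (\<alpha> + c) * \<bar>ln v - ln u\<bar>"
proof -
  have "\<bar>ell v - ell u\<bar> \<le> \<bar>\<alpha> * (ln v - ln u)\<bar> + \<bar>Re (char_exponent k v) - Re (char_exponent k u)\<bar>"
    unfolding ell_def by (simp add: algebra_simps)
  also have "\<dots> \<le> \<alpha> * \<bar>ln v - ln u\<bar> + c * \<bar>ln v - ln u\<bar>"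
    using Re_char_exponent_log_lipschitz[OF assms] alpha_gt_2 by (simp add: abs_mult)
  finally show ?thesis
    by (simp add: algebra_simps)
qed

definition phi_over_L :: "real \<Rightarrow> real" where
  "phi_over_L v = \<bar>v\<bar> powr \<alpha> * cmod (phi k v) / L \<bar>v\<bar>"

lemma filterlim_times_exp1: "filterlim (\<lambda>v::real. exp 1 * v) at_top at_top"
  by (rule filterlim_tendsto_pos_mult_at_top[OF tendsto_const exp_gt_zero filterlim_ident])

lemma tendsto_phi_over_L: "(phi_over_L \<longlongrightarrow> B) at_top"
  using tendsto_mono[OF at_top_le_at_infinity phi_asymptotics] unfolding phi_over_L_def[abs_def] .

lemma eventually_L_pos_le:
  "\<forall>\<^sub>F v in at_top. 0 < L v \<and> L v \<le> (2 / B) * (v powr \<alpha> * cmod (phi k v))"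
proof -
  have "B / 2 < B"
    using B_pos by simp
  from eventually_conj[OF order_tendstoD(1)[OF tendsto_phi_over_L this] eventually_gt_at_top[of 1]]
  show ?thesis
  proof (rule eventually_mono)
    fix v assume v: "B / 2 < phi_over_L v \<and> 1 < v"
    then have "L v \<noteq> 0"
      using B_pos by (auto simp: phi_over_L_def)
    then have L_pos: "0 < L v"
      using L_nonneg[of v] v by simp
    have v_abs: "\<bar>v\<bar> = v"
      using v by simp
    have "B / 2 < v powr \<alpha> * cmod (phi k v) / L v"
      using v[unfolded phi_over_L_def v_abs] by simp
    then have "B / 2 * L v < v powr \<alpha> * cmod (phi k v)"
      using L_pos by (simp add: less_divide_eq)
    then show "0 < L v \<and> L v \<le> (2 / B) * (v powr \<alpha> * cmod (phi k v))"
      using L_pos B_pos by (simp add: field_simps)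
  qed
qed

text \<open>\<open>ell (e v) - ell v\<close> is the logarithm of \<open>phi_over_L (e v) / phi_over_L v\<close> times
  \<open>L (e v) / L v\<close>; both ratios tend to 1.\<close>

lemma ell_increment_tendsto_0: "((\<lambda>v. ell (exp 1 * v) - ell v) \<longlongrightarrow> 0) at_top"
proof -
  have "((\<lambda>v. phi_over_L (exp 1 * v)) \<longlongrightarrow> B) at_top"
    using filterlim_compose[OF tendsto_phi_over_L filterlim_times_exp1] by (simp add: o_def)
  moreover have "((\<lambda>x. L (exp 1 * x) / L x) \<longlongrightarrow> 1) at_top"
    using slowly_varying_L unfolding slowly_varying_def by simp
  ultimately have "((\<lambda>v. ln (phi_over_L (exp 1 * v) / phi_over_L v * (L (exp 1 * v) / L v)))
      \<longlongrightarrow> ln (B / B * 1)) at_top"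
    using B_pos by (intro tendsto_intros tendsto_phi_over_L) auto
  moreover have "\<forall>\<^sub>F v in at_top.
      ln (phi_over_L (exp 1 * v) / phi_over_L v * (L (exp 1 * v) / L v)) = ell (exp 1 * v) - ell v"
  proof -
    have "\<forall>\<^sub>F v in at_top. 0 < L (exp 1 * v)"
      using filterlim_iff[THEN iffD1, OF filterlim_times_exp1, rule_format, OF eventually_L_pos_le]
      by (auto elim: eventually_mono)
    moreover have "\<forall>\<^sub>F v in at_top. 0 < L v"
      using eventually_L_pos_le by (auto elim: eventually_mono)
    moreover have "\<forall>\<^sub>F v in at_top. (0::real) < v"
      by (rule eventually_gt_at_top)
    ultimately show ?thesis
    proof eventually_elim
      case (elim v)
      then have "phi_over_L (exp 1 * v) / phi_over_L v * (L (exp 1 * v) / L v)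
          = ((exp 1 * v) powr \<alpha> * cmod (phi k (exp 1 * v))) / (v powr \<alpha> * cmod (phi k v))"
        unfolding phi_over_L_def by (simp add: field_simps)
      also have "\<dots> = exp (ell (exp 1 * v) - ell v)"
        unfolding ell_def norm_phi using elim
        by (simp add: powr_def exp_add exp_diff mult.commute)
      finally show ?case
        by simp
    qed
  qed
  ultimately show ?thesis
    using B_pos by (simp add: tendsto_cong)
qed

text \<open>A Potter-type bound for \<open>ell\<close>: walk from \<open>u\<close> to \<open>w\<close> in steps of factor \<open>e\<close>, each costing less
  than \<open>\<delta>\<close> eventually, and cover the remaining fraction of a step by the Lipschitz bound.\<close>

lemma potter_bound:
  assumes "0 < \<delta>"
  shows "\<exists>V0\<ge>1. \<forall>u w. V0 \<le> u \<longrightarrow> u \<le> w \<longrightarrow> ell w - ell u \<le> \<delta> * (ln w - ln u) + (\<alpha> + c)"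
proof -
  obtain V where V: "\<And>v. V \<le> v \<Longrightarrow> ell (exp 1 * v) - ell v < \<delta>"
    using order_tendstoD(2)[OF ell_increment_tendsto_0 assms]
    unfolding eventually_at_top_linorder by blast
  define V0 where "V0 = max V 1"
  have steps: "ell (exp (real n) * u) - ell u \<le> real n * \<delta>" if "V0 \<le> u" for n u
  proof (induction n)
    case (Suc n)
    have "1 * u \<le> exp (real n) * u"
      using that unfolding V0_def by (intro mult_right_mono) auto
    then have "V \<le> exp (real n) * u"
      using that unfolding V0_def by linarith
    then have "ell (exp 1 * (exp (real n) * u)) - ell (exp (real n) * u) < \<delta>"
      by (rule V)
    moreover have "exp (real (Suc n)) * u = exp 1 * (exp (real n) * u)"
      by (simp add: exp_add[symmetric] add.commute)
    ultimately show ?case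
      using Suc.IH by (simp only:) (simp add: algebra_simps)
  qed simp
  have "ell w - ell u \<le> \<delta> * (ln w - ln u) + (\<alpha> + c)" if u: "V0 \<le> u" and w: "u \<le> w" for u w
  proof -
    have u_pos: "0 < u"
      using u unfolding V0_def by simp
    have "0 \<le> ln w - ln u"
      using u_pos w by simp
    define n where "n = nat \<lfloor>ln w - ln u\<rfloor>"
    have n: "real n \<le> ln w - ln u" "ln w - ln u < real n + 1"
      unfolding n_def using \<open>0 \<le> ln w - ln u\<close> by linarith+
    have "ln (exp (real n) * u) = real n + ln u"
      using u_pos by (simp add: ln_mult)
    then have "ell w - ell (exp (real n) * u) \<le> (\<alpha> + c) * (ln w - ln u - real n)"
      using ell_log_lipschitz[of "exp (real n) * u" w] u_pos w n by (simp add: abs_le_iff algebra_simps)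
    also have "\<dots> \<le> \<alpha> + c"
      using n alpha_gt_2 c_nonneg by (intro mult_left_le) auto
    finally show ?thesis
      using steps[OF u, of n] mult_right_mono[OF n(1), of \<delta>] assms by (simp add: algebra_simps)
  qed
  then show ?thesis
    unfolding V0_def by (intro exI[of _ "max V 1"]) auto
qed

lemma phi_ratio_le_far:
  assumes potter: "\<And>u w. V0 \<le> u \<Longrightarrow> u \<le> w \<Longrightarrow> ell w - ell u \<le> (\<alpha> - 2) / 2 * (ln w - ln u) + (\<alpha> + c)"
    and V0: "1 \<le> V0" "V0 \<le> r * s" and s: "0 \<le> s" "s \<le> 1"
  shows "exp (Re (char_exponent k r) - Re (char_exponent k (r * s))) * (r / (1 + r * s))\<^sup>2
    \<le> exp (\<alpha> + c)"
proof -
  have s_pos: "0 < s"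
    using V0 s by (cases "s = 0") auto
  then have r_pos: "0 < r"
    using V0 by (smt (verit) zero_less_mult_iff)
  have "r * s \<le> r"
    using s r_pos by (simp add: mult_le_cancel_left1)
  moreover have "ln r - ln (r * s) = - ln s"
    using r_pos s_pos by (simp add: ln_mult)
  ultimately have "ell r - ell (r * s) \<le> (\<alpha> - 2) / 2 * - ln s + (\<alpha> + c)"
    using potter[OF V0(2)] by metis
  moreover have "Re (char_exponent k r) - Re (char_exponent k (r * s)) = ell r - ell (r * s) + \<alpha> * ln s"
    unfolding ell_def using r_pos s_pos by (simp add: ln_mult algebra_simps)
  moreover have "(\<alpha> - 2) / 2 * - ln s + \<alpha> * ln s = (\<alpha> + 2) / 2 * ln s"
    by (simp add: field_simps)
  ultimately have X: "Re (char_exponent k r) - Re (char_exponent k (r * s)) \<le> (\<alpha> + 2) / 2 * ln s + (\<alpha> + c)"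
    by linarith
  have "r * s / (1 + r * s) \<le> 1"
    using mult_pos_pos[OF r_pos s_pos] by (simp add: divide_le_eq_1)
  then have "r / (1 + r * s) \<le> 1 / s"
    using r_pos s_pos by (simp add: field_simps)
  then have "(r / (1 + r * s))\<^sup>2 \<le> (1 / s)\<^sup>2"
    using r_pos s_pos by (intro power_mono) auto
  also have "\<dots> = inverse (s powr 2)"
    using s_pos by (simp add: powr_numeral power_one_over inverse_eq_divide)
  also have "\<dots> = exp (- 2 * ln s)"
    using s_pos by (simp add: powr_def exp_minus)
  finally have "exp (Re (char_exponent k r) - Re (char_exponent k (r * s))) * (r / (1 + r * s))\<^sup>2
      \<le> exp ((\<alpha> + 2) / 2 * ln s + (\<alpha> + c)) * exp (- 2 * ln s)"
    using X by (intro mult_mono) auto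
  also have "\<dots> = exp ((\<alpha> - 2) / 2 * ln s + (\<alpha> + c))"
    by (simp add: exp_add[symmetric] algebra_simps)
  also have "\<dots> \<le> exp (\<alpha> + c)"
    using alpha_gt_2 s_pos s by (simp add: mult_nonneg_nonpos)
  finally show ?thesis .
qed

lemma phi_ratio_le_near:
  assumes potter: "\<And>u w. V0 \<le> u \<Longrightarrow> u \<le> w \<Longrightarrow> ell w - ell u \<le> (\<alpha> - 2) / 2 * (ln w - ln u) + (\<alpha> + c)"
    and V0: "1 \<le> V0" "V0 \<le> r" "r * s \<le> V0" and s: "0 \<le> s"
  shows "exp (Re (char_exponent k r) - Re (char_exponent k (r * s))) * (r / (1 + r * s))\<^sup>2
    \<le> exp (ell V0 + (\<alpha> + c) + c * V0 - (\<alpha> - 2) / 2 * ln V0)"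
proof -
  have r_pos: "0 < r"
    using V0 by simp
  have "- Re (char_exponent k (r * s)) \<le> c * V0"
    using abs_Re_char_exponent_le[of "r * s"] mult_left_mono[of "\<bar>r * s\<bar>" V0 c] c_nonneg V0 r_pos s
    by (simp add: abs_mult)
  moreover have "ell r - ell V0 \<le> (\<alpha> - 2) / 2 * (ln r - ln V0) + (\<alpha> + c)"
    using potter V0 by blast
  moreover have "0 \<le> (\<alpha> - 2) / 2 * ln r"
    using V0 alpha_gt_2 by simp
  moreover have "(\<alpha> - 2) / 2 * (ln r - ln V0) - \<alpha> * ln r + 2 * ln r
      = - ((\<alpha> - 2) / 2 * ln r) - (\<alpha> - 2) / 2 * ln V0"
    by (simp add: field_simps)
  ultimately have X: "Re (char_exponent k r) - Re (char_exponent k (r * s)) + 2 * ln r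
      \<le> ell V0 + (\<alpha> + c) + c * V0 - (\<alpha> - 2) / 2 * ln V0"
    unfolding ell_def[of r] by linarith
  have "r / (1 + r * s) \<le> r"
    using r_pos s by (simp add: divide_le_eq)
  then have "(r / (1 + r * s))\<^sup>2 \<le> r\<^sup>2"
    using r_pos s by (intro power_mono) auto
  also have "\<dots> = r powr 2"
    using r_pos by (simp add: powr_numeral)
  also have "\<dots> = exp (2 * ln r)"
    using r_pos by (simp add: powr_def)
  finally have "exp (Re (char_exponent k r) - Re (char_exponent k (r * s))) * (r / (1 + r * s))\<^sup>2
      \<le> exp (Re (char_exponent k r) - Re (char_exponent k (r * s))) * exp (2 * ln r)"
    by (intro mult_left_mono) auto
  also have "\<dots> \<le> exp (ell V0 + (\<alpha> + c) + c * V0 - (\<alpha> - 2) / 2 * ln V0)"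
    using X by (simp add: exp_add[symmetric])
  finally show ?thesis .
qed

text \<open>This is where \<open>\<alpha> > 2\<close> enters: \<open>\<bar>\<phi>(r)\<bar> / \<bar>\<phi>(r t)\<bar>\<close> decays like \<open>\<bar>t\<bar> powr \<alpha>\<close> up to a slowly
  varying factor, which beats the factor \<open>\<bar>t\<bar> powr -2\<close>.\<close>

lemma phi_ratio_bound:
  "\<exists>K R. 1 \<le> R \<and> (\<forall>r\<ge>R. \<forall>t. \<bar>t\<bar> \<le> 1 \<longrightarrow>
     cmod (phi k r) / cmod (phi k (r * t)) * (r / (1 + r * \<bar>t\<bar>))\<^sup>2 \<le> K)"
proof -
  obtain V0 where V0: "1 \<le> V0"
    and potter: "\<And>u w. V0 \<le> u \<Longrightarrow> u \<le> w \<Longrightarrow> ell w - ell u \<le> (\<alpha> - 2) / 2 * (ln w - ln u) + (\<alpha> + c)"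
    using potter_bound[of "(\<alpha> - 2) / 2"] alpha_gt_2 by auto
  define K where "K = max (exp (\<alpha> + c)) (exp (ell V0 + (\<alpha> + c) + c * V0 - (\<alpha> - 2) / 2 * ln V0))"
  have "cmod (phi k r) / cmod (phi k (r * t)) * (r / (1 + r * \<bar>t\<bar>))\<^sup>2 \<le> K"
    if r: "V0 \<le> r" and t: "\<bar>t\<bar> \<le> 1" for r t
  proof -
    have "cmod (phi k r) / cmod (phi k (r * t))
        = exp (Re (char_exponent k r) - Re (char_exponent k (r * \<bar>t\<bar>)))"
      using r V0 Re_char_exponent_abs[where t = "r * t"] by (simp add: norm_phi exp_diff abs_mult)
    moreover have "V0 \<le> r * \<bar>t\<bar> \<or> r * \<bar>t\<bar> \<le> V0"
      by linarith
    ultimately show ?thesis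
      using phi_ratio_le_far[OF potter V0, of r "\<bar>t\<bar>"] phi_ratio_le_near[OF potter V0 r, of "\<bar>t\<bar>"] t
      unfolding K_def by auto
  qed
  then show ?thesis
    using V0 by blast
qed

end

section \<open>The deconvolution kernel\<close>

lemma has_integral_iexp_by_parts:
  fixes f f' :: "real \<Rightarrow> complex" and x :: real
  assumes f': "\<And>t. (f has_vector_derivative f' t) (at t)" and "f (-1) = 0" "f 1 = 0"
  shows "((\<lambda>t. iexp (- t * x) * f' t) has_integral
    (\<i> * complex_of_real x * integral {-1..1} (\<lambda>t. iexp (- t * x) * f t))) {-1..1}"
proof -
  let ?e = "\<lambda>t. iexp (- t * x)"
  have "(?e has_vector_derivative - \<i> * complex_of_real x * ?e t) (at t)" for t
  proof -
    have "((\<lambda>z. exp (- \<i> * z * complex_of_real x)) has_field_derivative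
        - \<i> * complex_of_real x * exp (- \<i> * complex_of_real t * complex_of_real x)) (at (complex_of_real t))"
      by (auto intro!: derivative_eq_intros simp: algebra_simps)
    from field_vector_diff_chain_at[OF has_vector_derivative_of_real[OF DERIV_ident] this]
    show ?thesis
      by (simp add: o_def algebra_simps)
  qed
  then have ef': "((\<lambda>t. ?e t * f t) has_vector_derivative ?e t * f' t + (- \<i> * complex_of_real x * ?e t) * f t) (at t)"
    for t using has_vector_derivative_mult[OF _ f'] by blast
  have "((\<lambda>t. ?e t * f' t + (- \<i> * complex_of_real x * ?e t) * f t) has_integral ?e 1 * f 1 - ?e (-1) * f (-1)) {-1..1}"
  proof (rule fundamental_theorem_of_calculus)
    show "((\<lambda>t. ?e t * f t) has_vector_derivative ?e t * f' t + (- \<i> * complex_of_real x * ?e t) * f t)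
        (at t within {-1..1})" for t
      by (rule has_vector_derivative_at_within[OF ef'])
  qed simp
  moreover have "continuous_on {-1..1} (\<lambda>t. ?e t * f t)"
    using ef' by (intro continuous_on_vector_derivative) (auto intro: has_vector_derivative_at_within)
  then have "((\<lambda>t. ?e t * f t) has_integral integral {-1..1} (\<lambda>t. ?e t * f t)) {-1..1}"
    by (simp add: integrable_integral integrable_continuous_interval)
  ultimately have "((\<lambda>t. (?e t * f' t + (- \<i> * complex_of_real x * ?e t) * f t) - (- \<i> * complex_of_real x) * (?e t * f t))
      has_integral ((?e 1 * f 1 - ?e (-1) * f (-1)) - (- \<i> * complex_of_real x) * integral {-1..1} (\<lambda>t. ?e t * f t))) {-1..1}"
    by (rule has_integral_diff[OF _ has_integral_mult_right])
  then show ?thesis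
    using assms by (simp add: algebra_simps)
qed

lemma has_vector_derivative_divide_arg:
  fixes f :: "real \<Rightarrow> complex"
  assumes "\<And>u. (f has_vector_derivative f' u) (at u)"
  shows "((\<lambda>t. f (t / h)) has_vector_derivative complex_of_real (1 / h) * f' (t / h)) (at t)"
proof -
  have "((\<lambda>t. t / h) has_vector_derivative 1 / h) (at t)"
    using DERIV_cdivide[OF DERIV_ident, of h] by (simp add: has_real_derivative_iff_has_vector_derivative)
  from vector_diff_chain_at[OF this assms]
  show ?thesis
    by (simp add: o_def scaleR_conv_of_real)
qed

locale smooth_ftW =
  fixes W :: "real \<Rightarrow> real" and D :: "nat \<Rightarrow> real \<Rightarrow> complex"
  assumes D_0: "D 0 = ftW W"
    and D_has_vector_derivative: "\<And>j u. j < 3 \<Longrightarrow> (D j has_vector_derivative D (Suc j) u) (at u)"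
    and continuous_D_3: "continuous_on UNIV (D 3)"
    and ftW_vanishes: "\<And>u. 1 < \<bar>u\<bar> \<Longrightarrow> ftW W u = 0"
begin

lemma D_vanishes: "j \<le> 3 \<Longrightarrow> 1 < \<bar>u\<bar> \<Longrightarrow> D j u = 0"
proof (induction j arbitrary: u)
  case 0
  then show ?case
    using ftW_vanishes D_0 by simp
next
  case (Suc j)
  have "((\<lambda>_. 0::complex) has_vector_derivative 0) (at u)"
    by simp
  then have "(D j has_vector_derivative 0) (at u)"
    by (rule has_vector_derivative_transform_within_open[where S = "{v. 1 < \<bar>v\<bar>}"])
       (use Suc in \<open>auto intro!: open_Collect_less continuous_intros\<close>)
  with D_has_vector_derivative[of j u] Suc.prems show ?case
    using vector_derivative_unique_at by auto
qed

lemma continuous_on_D: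
  assumes "j \<le> 3"
  shows "continuous_on S (D j)"
proof (cases "j = 3")
  case True
  then show ?thesis
    using continuous_on_subset[OF continuous_D_3] by blast
next
  case False
  with assms have "j < 3"
    by simp
  then show ?thesis
    by (intro continuous_on_vector_derivative)
       (auto intro: has_vector_derivative_at_within D_has_vector_derivative)
qed

lemma D_at_endpoints:
  assumes "j \<le> 3"
  shows "D j 1 = 0" "D j (-1) = 0"
proof -
  have closed: "closed {u. D j u = 0}"
    using closed_Collect_eq[OF continuous_on_D[OF assms] continuous_on_const] by simp
  have "{1<..} \<subseteq> {u. D j u = 0}"
    using D_vanishes[OF assms] by auto
  then have "closure {1<..} \<subseteq> {u. D j u = 0}"
    using closed by (intro closure_minimal)
  then show "D j 1 = 0"
    by auto
  have "{..<-1} \<subseteq> {u. D j u = 0}"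
    using D_vanishes[OF assms] by auto
  then have "closure {..<-1} \<subseteq> {u. D j u = 0}"
    using closed by (intro closure_minimal)
  then show "D j (-1) = 0"
    by auto
qed

lemma D_bounded: "\<exists>d. \<forall>j\<le>3. \<forall>u. cmod (D j u) \<le> d"
proof -
  have "\<exists>b. \<forall>u\<in>{-1..1}. cmod (D j u) \<le> b" if "j \<le> 3" for j
    using compact_imp_bounded[OF compact_continuous_image[OF continuous_on_D[OF that] compact_Icc]]
    unfolding bounded_iff by auto
  then obtain b where b: "\<And>j u. j \<le> 3 \<Longrightarrow> u \<in> {-1..1} \<Longrightarrow> cmod (D j u) \<le> b j"
    by metis
  have "cmod (D j u) \<le> max 1 (Max (b ` {..3}))" if "j \<le> 3" for j u
  proof (cases "1 < \<bar>u\<bar>")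
    case False
    then have "u \<in> {-1..1}"
      by auto
    then have "cmod (D j u) \<le> b j"
      by (rule b[OF that])
    also have "b j \<le> Max (b ` {..3})"
      using that by (intro Max_ge) auto
    finally show ?thesis
      by simp
  qed (simp add: D_vanishes that)
  then show ?thesis
    by (intro exI[of _ "max 1 (Max (b ` {..3}))"]) auto
qed

end

text \<open>Applied below with \<open>b1, b2, b3\<close> the norms of the first three derivatives of \<open>ln (1 / \<phi>(t / h))\<close>,
  \<open>u = 1 / (h + \<bar>t\<bar>)\<close> and \<open>E = 1 + c\<close>.\<close>

lemma monomial_bounds:
  fixes b1 b2 b3 h E u :: real
  assumes b1: "0 \<le> b1" "b1 \<le> E * u" and b2: "0 \<le> b2" "b2 \<le> E * u\<^sup>2" and b3: "h * b3 \<le> E * u\<^sup>2"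
    and u: "1 / 2 \<le> u" and h: "0 < h" "h * u \<le> 1" and E: "1 \<le> E"
  shows "1 \<le> 4 * E ^ 3 * u\<^sup>2" "b1 \<le> 2 * E ^ 3 * u\<^sup>2" "b2 \<le> E ^ 3 * u\<^sup>2" "b1 * b1 \<le> E ^ 3 * u\<^sup>2"
    "h * b3 \<le> E ^ 3 * u\<^sup>2" "h * (b1 * b2) \<le> E ^ 3 * u\<^sup>2" "h * (b1 * b1 * b1) \<le> E ^ 3 * u\<^sup>2"
proof -
  have u_le: "u \<le> 2 * u\<^sup>2"
    using u by (simp add: power2_eq_square)
  have EE: "E \<le> E * E" "E * E \<le> E ^ 3"
    using E by (simp_all add: power3_eq_cube)
  then have E3: "1 \<le> E ^ 3" "E \<le> E ^ 3"
    using E by linarith+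
  have "1 \<le> 1 * (4 * u\<^sup>2)"
    using u_le u by simp
  also have "\<dots> \<le> E ^ 3 * (4 * u\<^sup>2)"
    by (rule mult_right_mono[OF E3(1)]) simp
  finally show "1 \<le> 4 * E ^ 3 * u\<^sup>2"
    by (simp add: ac_simps)
  have "b1 \<le> E ^ 3 * (2 * u\<^sup>2)"
    using mult_mono[OF E3(2) u_le] b1 E u by simp
  then show "b1 \<le> 2 * E ^ 3 * u\<^sup>2"
    by (simp add: ac_simps)
  show "b2 \<le> E ^ 3 * u\<^sup>2"
    using mult_right_mono[OF E3(2), of "u\<^sup>2"] b2 by simp
  show "h * b3 \<le> E ^ 3 * u\<^sup>2"
    using mult_right_mono[OF E3(2), of "u\<^sup>2"] b3 by simp
  have b11: "b1 * b1 \<le> (E * E) * u\<^sup>2"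
    using mult_mono[OF b1(2) b1(2)] b1 by (simp add: power2_eq_square ac_simps)
  then show "b1 * b1 \<le> E ^ 3 * u\<^sup>2"
    using mult_right_mono[OF EE(2), of "u\<^sup>2"] by simp
  have "h * (b1 * b2) \<le> h * ((E * u) * (E * u\<^sup>2))"
    using b1 b2 h E by (intro mult_left_mono mult_mono) auto
  also have "\<dots> = (E * E) * u\<^sup>2 * (h * u)"
    by (simp add: power2_eq_square ac_simps)
  also have "\<dots> \<le> (E * E) * u\<^sup>2 * 1"
    using h E by (intro mult_left_mono) auto
  also have "\<dots> \<le> E ^ 3 * u\<^sup>2"
    using mult_right_mono[OF EE(2), of "u\<^sup>2"] by simp
  finally show "h * (b1 * b2) \<le> E ^ 3 * u\<^sup>2" .
  have "b1 * b1 * b1 \<le> (E * E) * u\<^sup>2 * (E * u)"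
    using mult_mono[OF b11 b1(2)] b1 by simp
  then have "h * (b1 * b1 * b1) \<le> h * ((E * E) * u\<^sup>2 * (E * u))"
    using h by (intro mult_left_mono) auto
  also have "\<dots> = E ^ 3 * u\<^sup>2 * (h * u)"
    by (simp add: power3_eq_cube ac_simps)
  also have "\<dots> \<le> E ^ 3 * u\<^sup>2"
    using mult_left_mono[OF h(2), of "E ^ 3 * u\<^sup>2"] order_trans[OF zero_le_one E3(1)] by simp
  finally show "h * (b1 * b1 * b1) \<le> E ^ 3 * u\<^sup>2" .
qed

locale deconvolution_kernel = regularly_varying_phi + smooth_ftW

locale kernel_at_bandwidth = deconvolution_kernel +
  fixes h d K :: real
  assumes h_pos: "0 < h" and h_le_1: "h \<le> 1"
    and norm_D_le: "\<And>j u. j \<le> 3 \<Longrightarrow> cmod (D j u) \<le> d"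
    and phi_ratio_le: "\<And>t. \<bar>t\<bar> \<le> 1 \<Longrightarrow>
      cmod (phi k (1 / h)) / cmod (phi k (t / h)) * (1 / (h + \<bar>t\<bar>))\<^sup>2 \<le> K"
    and L_inverse_h_nonneg: "0 \<le> L (1 / h)"
    and L_inverse_h_le: "h powr \<alpha> * L (1 / h) \<le> (2 / B) * cmod (phi k (1 / h))"
begin

definition recip_phi :: "real \<Rightarrow> complex" where
  "recip_phi t = exp (- char_exponent k (t / h))"

definition q :: "real \<Rightarrow> complex" where
  "q t = - (\<i> / complex_of_real h) * phik k (t / h)"

definition q' :: "real \<Rightarrow> complex" where
  "q' t = - (\<i> / complex_of_real h ^ 2) * phik' k (t / h)"

definition q'' :: "real \<Rightarrow> complex" where
  "q'' t = - (\<i> / complex_of_real h ^ 3) * phik'' k (t / h)"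

lemma recip_phi_eq: "recip_phi t = inverse (phi k (t / h))"
  unfolding recip_phi_def phi_eq_exp_char_exponent by (simp add: exp_minus)

lemma recip_phi_has_vector_derivative: "(recip_phi has_vector_derivative q t * recip_phi t) (at t)"
proof -
  have "((\<lambda>t. - char_exponent k (t / h)) has_vector_derivative
      - (complex_of_real (1 / h) * (\<i> * phik k (t / h)))) (at t)"
    by (intro has_vector_derivative_minus has_vector_derivative_divide_arg char_exponent_has_vector_derivative)
  from field_vector_diff_chain_at[OF this DERIV_exp]
  show ?thesis
    unfolding recip_phi_def q_def using h_pos by (simp add: o_def field_simps)
qed

lemma q_has_vector_derivative: "(q has_vector_derivative q' t) (at t)"
  using has_vector_derivative_mult_right[OF has_vector_derivative_divide_arg[OF phik_has_vector_derivative],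
      of "- (\<i> / complex_of_real h)"] h_pos
  unfolding q_def[abs_def] q'_def by (simp add: field_simps power2_eq_square)

lemma q'_has_vector_derivative: "(q' has_vector_derivative q'' t) (at t)"
  using has_vector_derivative_mult_right[OF has_vector_derivative_divide_arg[OF phik'_has_vector_derivative],
      of "- (\<i> / complex_of_real h ^ 2)"] h_pos
  unfolding q'_def[abs_def] q''_def by (simp add: field_simps power2_eq_square power3_eq_cube)

definition rho :: "real \<Rightarrow> real" where
  "rho t = 1 / (h + \<bar>t\<bar>)"

lemma rho_pos: "0 < rho t"
  unfolding rho_def using h_pos by simp

lemma rho_ge_half: "\<bar>t\<bar> \<le> 1 \<Longrightarrow> 1 / 2 \<le> rho t"
  unfolding rho_def using h_pos h_le_1 by (simp add: field_simps)

lemma h_rho_le_1: "h * rho t \<le> 1"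
  unfolding rho_def using h_pos by (simp add: field_simps)

lemma scaled_norm_le_rho_power:
  assumes "cmod z \<le> c / (1 + \<bar>t / h\<bar>) ^ n" "0 < n"
  shows "cmod z / h ^ n \<le> c * rho t ^ n"
proof -
  have "cmod z / h ^ n \<le> c / (1 + \<bar>t / h\<bar>) ^ n / h ^ n"
    using assms h_pos by (intro divide_right_mono) auto
  also have "\<dots> = c / ((1 + \<bar>t / h\<bar>) * h) ^ n"
    by (simp add: power_mult_distrib)
  also have "(1 + \<bar>t / h\<bar>) * h = h + \<bar>t\<bar>"
    using h_pos by (simp add: abs_divide field_simps)
  finally show ?thesis
    unfolding rho_def by (simp add: power_one_over)
qed

lemma norm_q_le: "cmod (q t) \<le> c * rho t"
  using scaled_norm_le_rho_power[of "phik k (t / h)" t 1] norm_phik_le[of "t / h"] h_pos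
  unfolding q_def by (simp add: norm_mult norm_divide)

lemma norm_q'_le: "cmod (q' t) \<le> c * rho t ^ 2"
  using scaled_norm_le_rho_power[of "phik' k (t / h)" t 2] norm_phik'_le[of "t / h"] h_pos
  unfolding q'_def by (simp add: norm_mult norm_divide norm_power)

lemma h_norm_q''_le: "h * cmod (q'' t) \<le> c * rho t ^ 2"
proof -
  have "h * cmod (q'' t) = cmod (phik'' k (t / h)) / h ^ 2"
    unfolding q''_def using h_pos by (simp add: norm_mult norm_divide norm_power power2_eq_square power3_eq_cube)
  also have "\<dots> \<le> c * rho t ^ 2"
    using scaled_norm_le_rho_power[of "phik'' k (t / h)" t 2] norm_phik''_le[of "t / h"] by simp
  finally show ?thesis .
qed

text \<open>By the Leibniz rule and \<open>recip_phi' = q * recip_phi\<close>, \<open>deriv_factor j t * recip_phi t\<close> is the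
  \<open>j\<close>-th derivative of \<open>\<phi>\<^sub>W(t) / \<phi>(t / h)\<close>.\<close>

definition deriv_factor :: "nat \<Rightarrow> real \<Rightarrow> complex" where
  "deriv_factor j t =
    (if j = 0 then D 0 t
     else if j = 1 then D 1 t + D 0 t * q t
     else if j = 2 then D 2 t + 2 * D 1 t * q t + D 0 t * (q' t + q t * q t)
     else D 3 t + 3 * D 2 t * q t + 3 * D 1 t * (q' t + q t * q t)
       + D 0 t * (q'' t + 3 * q t * q' t + q t * q t * q t))"

definition integrand_deriv :: "nat \<Rightarrow> real \<Rightarrow> complex" where
  "integrand_deriv j t = deriv_factor j t * recip_phi t"

lemma deriv_factor_has_vector_derivative:
  assumes "j < 3"
  shows "(deriv_factor j has_vector_derivative deriv_factor (Suc j) t - deriv_factor j t * q t) (at t)"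
proof -
  have D': "(D 0 has_vector_derivative D 1 t) (at t)" "(D 1 has_vector_derivative D 2 t) (at t)"
      "(D 2 has_vector_derivative D 3 t) (at t)"
    using D_has_vector_derivative[of 0 t] D_has_vector_derivative[of 1 t] D_has_vector_derivative[of 2 t]
    by (simp_all add: numeral_3_eq_3 numeral_2_eq_2)
  note q' = q_has_vector_derivative q'_has_vector_derivative
  consider "j = 0" | "j = 1" | "j = 2"
    using assms by linarith
  then show ?thesis
  proof cases
    case 1
    have "deriv_factor 0 = D 0"
      unfolding deriv_factor_def by auto
    with 1 D'(1) show ?thesis
      by (simp add: deriv_factor_def)
  next
    case 2
    have "deriv_factor 1 = (\<lambda>t. D 1 t + D 0 t * q t)"
      unfolding deriv_factor_def by auto
    then have "(deriv_factor 1 has_vector_derivative D 2 t + (D 0 t * q' t + D 1 t * q t)) (at t)"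
      using has_vector_derivative_add[OF D'(2) has_vector_derivative_mult[OF D'(1) q'(1)]] by simp
    with 2 show ?thesis
      by (simp add: deriv_factor_def algebra_simps)
  next
    case 3
    have e: "deriv_factor 2 = (\<lambda>t. D 2 t + 2 * D 1 t * q t + D 0 t * (q' t + q t * q t))"
      unfolding deriv_factor_def by auto
    show ?thesis
      unfolding 3 e
      by (rule has_vector_derivative_eq_rhs[OF has_vector_derivative_add[OF
            has_vector_derivative_add[OF D'(3) has_vector_derivative_mult[OF
              has_vector_derivative_mult_right[OF D'(2), of 2] q'(1)]]
            has_vector_derivative_mult[OF D'(1) has_vector_derivative_add[OF q'(2)
              has_vector_derivative_mult[OF q'(1) q'(1)]]]]])
         (simp add: deriv_factor_def algebra_simps)
  qed
qed

lemma integrand_deriv_has_vector_derivative: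
  "j < 3 \<Longrightarrow> (integrand_deriv j has_vector_derivative integrand_deriv (Suc j) t) (at t)"
  unfolding integrand_deriv_def[abs_def]
  by (rule has_vector_derivative_eq_rhs[OF has_vector_derivative_mult[OF
        deriv_factor_has_vector_derivative recip_phi_has_vector_derivative]])
     (simp_all add: algebra_simps)

lemma d_nonneg: "0 \<le> d"
  using norm_D_le[of 0 0] norm_ge_zero[of "D 0 0"] by linarith

lemma norm_deriv_factor_le_poly:
  fixes t :: real
  defines "b1 \<equiv> cmod (q t)" and "b2 \<equiv> cmod (q' t)" and "b3 \<equiv> cmod (q'' t)"
  shows "cmod (deriv_factor 0 t) \<le> d * 1"
    and "cmod (deriv_factor 1 t) \<le> d * (1 + b1)"
    and "cmod (deriv_factor 2 t) \<le> d * (1 + 2 * b1 + (b2 + b1 * b1))"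
    and "cmod (deriv_factor 3 t)
      \<le> d * (1 + 3 * b1 + 3 * (b2 + b1 * b1) + (b3 + 3 * b1 * b2 + b1 * b1 * b1))"
proof -
  note D = norm_D_le[of 0 t] norm_D_le[of 1 t] norm_D_le[of 2 t] norm_D_le[of 3 t]
  have b: "0 \<le> b1" "0 \<le> b2" "0 \<le> b3"
    unfolding b1_def b2_def b3_def by simp_all
  have q2: "cmod (q' t + q t * q t) \<le> b2 + b1 * b1"
    unfolding b1_def b2_def using norm_triangle_ineq[of "q' t" "q t * q t"] by (simp add: norm_mult)
  have q3: "cmod (q'' t + 3 * q t * q' t + q t * q t * q t) \<le> b3 + 3 * b1 * b2 + b1 * b1 * b1"
    unfolding b1_def b2_def b3_def
    using norm_triangle_ineq[of "q'' t + 3 * q t * q' t" "q t * q t * q t"]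
      norm_triangle_ineq[of "q'' t" "3 * q t * q' t"] by (simp add: norm_mult)
  show "cmod (deriv_factor 0 t) \<le> d * 1"
    using D by (simp add: deriv_factor_def)
  have "cmod (deriv_factor 1 t) \<le> cmod (D 1 t) + cmod (D 0 t) * b1"
    unfolding deriv_factor_def b1_def using norm_triangle_ineq[of "D 1 t" "D 0 t * q t"] by (simp add: norm_mult)
  also have "\<dots> \<le> d + d * b1"
    using D b by (intro add_mono mult_right_mono) auto
  finally show "cmod (deriv_factor 1 t) \<le> d * (1 + b1)"
    by (simp add: algebra_simps)
  have "cmod (deriv_factor 2 t)
      \<le> cmod (D 2 t) + 2 * cmod (D 1 t) * b1 + cmod (D 0 t) * cmod (q' t + q t * q t)"
    unfolding deriv_factor_def b1_def
    using norm_triangle_ineq[of "D 2 t + 2 * D 1 t * q t" "D 0 t * (q' t + q t * q t)"]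
      norm_triangle_ineq[of "D 2 t" "2 * D 1 t * q t"] by (simp add: norm_mult)
  also have "\<dots> \<le> d + 2 * d * b1 + d * (b2 + b1 * b1)"
    using D b q2 d_nonneg by (intro add_mono mult_right_mono mult_mono) auto
  finally show "cmod (deriv_factor 2 t) \<le> d * (1 + 2 * b1 + (b2 + b1 * b1))"
    by (simp add: algebra_simps)
  have "cmod (deriv_factor 3 t)
      \<le> cmod (D 3 t) + 3 * cmod (D 2 t) * b1 + 3 * cmod (D 1 t) * cmod (q' t + q t * q t)
        + cmod (D 0 t) * cmod (q'' t + 3 * q t * q' t + q t * q t * q t)"
    unfolding deriv_factor_def b1_def
    using norm_triangle_ineq[of "D 3 t + 3 * D 2 t * q t + 3 * D 1 t * (q' t + q t * q t)"
        "D 0 t * (q'' t + 3 * q t * q' t + q t * q t * q t)"]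
      norm_triangle_ineq[of "D 3 t + 3 * D 2 t * q t" "3 * D 1 t * (q' t + q t * q t)"]
      norm_triangle_ineq[of "D 3 t" "3 * D 2 t * q t"] by (simp add: norm_mult)
  also have "\<dots> \<le> d + 3 * d * b1 + 3 * d * (b2 + b1 * b1) + d * (b3 + 3 * b1 * b2 + b1 * b1 * b1)"
    using D b q2 q3 d_nonneg by (intro add_mono mult_right_mono mult_mono mult_left_mono) auto
  finally show "cmod (deriv_factor 3 t)
      \<le> d * (1 + 3 * b1 + 3 * (b2 + b1 * b1) + (b3 + 3 * b1 * b2 + b1 * b1 * b1))"
    by (simp add: algebra_simps)
qed

lemma deriv_factor_poly_le:
  fixes t :: real
  assumes t: "\<bar>t\<bar> \<le> 1"
  defines "b1 \<equiv> cmod (q t)" and "b2 \<equiv> cmod (q' t)" and "b3 \<equiv> cmod (q'' t)"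
    and "M \<equiv> (1 + c) ^ 3 * rho t ^ 2"
  shows "1 \<le> 21 * M" "1 + b1 \<le> 21 * M" "1 + 2 * b1 + (b2 + b1 * b1) \<le> 21 * M"
    "h * (1 + 3 * b1 + 3 * (b2 + b1 * b1) + (b3 + 3 * b1 * b2 + b1 * b1 * b1)) \<le> 21 * M"
proof -
  have "c * rho t \<le> (1 + c) * rho t" "c * rho t ^ 2 \<le> (1 + c) * rho t ^ 2"
    using rho_pos by (simp_all add: mult_right_mono)
  then have "b1 \<le> (1 + c) * rho t" "b2 \<le> (1 + c) * rho t ^ 2" "h * b3 \<le> (1 + c) * rho t ^ 2"
    unfolding b1_def b2_def b3_def using norm_q_le norm_q'_le h_norm_q''_le by (meson order_trans)+
  from monomial_bounds[OF _ this(1) _ this(2,3) rho_ge_half[OF t] h_pos h_rho_le_1] c_nonneg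
  have m: "1 \<le> 4 * M" "b1 \<le> 2 * M" "b2 \<le> M" "b1 * b1 \<le> M" "h * b3 \<le> M"
      "h * (b1 * b2) \<le> M" "h * (b1 * b1 * b1) \<le> M"
    unfolding M_def b1_def b2_def by (simp_all add: power2_eq_square)
  have "h * b1 \<le> b1" "h * b2 \<le> b2" "h * (b1 * b1) \<le> b1 * b1"
    unfolding b1_def b2_def using h_pos h_le_1 by (simp_all add: mult_left_le_one_le)
  with m h_le_1 show "1 \<le> 21 * M" "1 + b1 \<le> 21 * M" "1 + 2 * b1 + (b2 + b1 * b1) \<le> 21 * M"
    "h * (1 + 3 * b1 + 3 * (b2 + b1 * b1) + (b3 + 3 * b1 * b2 + b1 * b1 * b1)) \<le> 21 * M"
    by (simp_all add: algebra_simps)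
qed

definition deriv_factor_bound :: real where
  "deriv_factor_bound = d * (21 * (1 + c) ^ 3)"

lemma deriv_factor_bound_nonneg: "0 \<le> deriv_factor_bound"
  unfolding deriv_factor_bound_def using d_nonneg c_nonneg by simp

lemma norm_deriv_factor_le:
  assumes "\<bar>t\<bar> \<le> 1"
  shows "j \<le> 2 \<Longrightarrow> cmod (deriv_factor j t) \<le> deriv_factor_bound * rho t ^ 2"
    and "h * cmod (deriv_factor 3 t) \<le> deriv_factor_bound * rho t ^ 2"
proof -
  have bound: "deriv_factor_bound * rho t ^ 2 = d * (21 * ((1 + c) ^ 3 * rho t ^ 2))"
    unfolding deriv_factor_bound_def by simp
  note P = norm_deriv_factor_le_poly[of t]
  note M = deriv_factor_poly_le[OF assms, THEN mult_left_mono[OF _ d_nonneg]]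
  show "cmod (deriv_factor j t) \<le> deriv_factor_bound * rho t ^ 2" if "j \<le> 2"
  proof -
    have "j = 0 \<or> j = 1 \<or> j = 2"
      using that by auto
    then show ?thesis
      unfolding bound using P M by (auto intro: order_trans)
  qed
  have "h * cmod (deriv_factor 3 t)
      \<le> d * (h * (1 + 3 * cmod (q t) + 3 * (cmod (q' t) + cmod (q t) * cmod (q t))
         + (cmod (q'' t) + 3 * cmod (q t) * cmod (q' t) + cmod (q t) * cmod (q t) * cmod (q t))))"
    using mult_left_mono[OF P(4), of h] h_pos by (simp add: ac_simps)
  then show "h * cmod (deriv_factor 3 t) \<le> deriv_factor_bound * rho t ^ 2"
    unfolding bound using M(4) by (rule order_trans)
qed

lemma integrand_deriv_at_endpoints:
  assumes "j \<le> 2"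
  shows "integrand_deriv j 1 = 0" "integrand_deriv j (-1) = 0"
  using D_at_endpoints[of 0] D_at_endpoints[of 1] D_at_endpoints[of 2] assms
  unfolding integrand_deriv_def deriv_factor_def by auto

lemma continuous_on_integrand_deriv: "j < 3 \<Longrightarrow> continuous_on S (integrand_deriv j)"
  using integrand_deriv_has_vector_derivative
  by (intro continuous_on_vector_derivative) (auto intro: has_vector_derivative_at_within)

definition kernel_integral :: "real \<Rightarrow> nat \<Rightarrow> complex" where
  "kernel_integral x j = integral {-1..1} (\<lambda>t. iexp (- t * x) * integrand_deriv j t)"

lemma kernel_integral_Suc_has_integral:
  assumes "j < 3"
  shows "((\<lambda>t. iexp (- t * x) * integrand_deriv (Suc j) t) has_integral
    \<i> * complex_of_real x * kernel_integral x j) {-1..1}"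
  unfolding kernel_integral_def using assms
  by (intro has_integral_iexp_by_parts integrand_deriv_has_vector_derivative integrand_deriv_at_endpoints)
     simp_all

lemma kernel_integral_Suc: "j < 3 \<Longrightarrow> kernel_integral x (Suc j) = \<i> * complex_of_real x * kernel_integral x j"
  using integral_unique[OF kernel_integral_Suc_has_integral] by (simp add: kernel_integral_def)

lemma kernel_integral_has_integral:
  "j \<le> 3 \<Longrightarrow> ((\<lambda>t. iexp (- t * x) * integrand_deriv j t) has_integral kernel_integral x j) {-1..1}"
proof (cases j)
  case 0
  have "continuous_on {-1..1} (\<lambda>t. iexp (- t * x) * integrand_deriv 0 t)"
    by (intro continuous_intros continuous_on_integrand_deriv) simp
  with 0 show ?thesis
    unfolding kernel_integral_def by (simp add: integrable_integral integrable_continuous_interval)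
qed (use kernel_integral_Suc_has_integral kernel_integral_Suc in auto)

lemma norm_kernel_integral:
  "j \<le> 3 \<Longrightarrow> cmod (kernel_integral x j) = \<bar>x\<bar> ^ j * cmod (kernel_integral x 0)"
  by (induction j) (auto simp: kernel_integral_Suc norm_mult)

lemma Kn_eq_kernel_integral: "Kn W k h x = complex_of_real (1 / (2 * pi)) * kernel_integral x 0"
proof -
  have integrand: "exp (- \<i> * complex_of_real (t * x)) * ftW W t / phi k (t / h)
      = indicator {-1..1} t *\<^sub>R (iexp (- t * x) * integrand_deriv 0 t)" for t
    using ftW_vanishes[of t]
    by (cases "t \<in> {-1..1}")
       (auto simp: integrand_deriv_def deriv_factor_def recip_phi_eq D_0 divide_inverse)
  have "set_integrable lborel {-1..1} (\<lambda>t. iexp (- t * x) * integrand_deriv 0 t)"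
    unfolding set_integrable_def
    by (intro borel_integrable_compact continuous_intros continuous_on_integrand_deriv) simp_all
  then have "(LINT t:{-1..1}|lborel. iexp (- t * x) * integrand_deriv 0 t) = kernel_integral x 0"
    unfolding kernel_integral_def by (rule set_borel_integral_eq_integral(2))
  then show ?thesis
    unfolding Kn_def integrand set_lebesgue_integral_def[symmetric] by simp
qed

lemma phi_recip_phi_le: "\<bar>t\<bar> \<le> 1 \<Longrightarrow> cmod (phi k (1 / h)) * cmod (recip_phi t) * rho t ^ 2 \<le> K"
  using phi_ratio_le unfolding recip_phi_eq rho_def by (simp add: norm_inverse divide_inverse)

lemma norm_integrand_deriv_le:
  assumes "\<bar>t\<bar> \<le> 1"
  shows "j \<le> 2 \<Longrightarrow> cmod (phi k (1 / h)) * cmod (integrand_deriv j t) \<le> deriv_factor_bound * K"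
    and "cmod (phi k (1 / h)) * (h * cmod (integrand_deriv 3 t)) \<le> deriv_factor_bound * K"
proof -
  have *: "cmod (phi k (1 / h)) * (y * cmod (recip_phi t)) \<le> deriv_factor_bound * K"
    if "y \<le> deriv_factor_bound * rho t ^ 2" for y
  proof -
    have "cmod (phi k (1 / h)) * (y * cmod (recip_phi t))
        \<le> deriv_factor_bound * (cmod (phi k (1 / h)) * cmod (recip_phi t) * rho t ^ 2)"
      using mult_right_mono[OF that, of "cmod (phi k (1 / h)) * cmod (recip_phi t)"] by (simp add: ac_simps)
    also have "\<dots> \<le> deriv_factor_bound * K"
      using phi_recip_phi_le[OF assms] deriv_factor_bound_nonneg by (rule mult_left_mono)
    finally show ?thesis .
  qed
  show "j \<le> 2 \<Longrightarrow> cmod (phi k (1 / h)) * cmod (integrand_deriv j t) \<le> deriv_factor_bound * K"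
    using *[OF norm_deriv_factor_le(1)[OF assms]] by (simp add: integrand_deriv_def norm_mult)
  show "cmod (phi k (1 / h)) * (h * cmod (integrand_deriv 3 t)) \<le> deriv_factor_bound * K"
    using *[OF norm_deriv_factor_le(2)[OF assms]] by (simp add: integrand_deriv_def norm_mult ac_simps)
qed

lemma norm_kernel_integral_le:
  shows "j \<le> 2 \<Longrightarrow> cmod (phi k (1 / h)) * cmod (kernel_integral x j) \<le> 2 * (deriv_factor_bound * K)"
    and "cmod (phi k (1 / h)) * (h * cmod (kernel_integral x 3)) \<le> 2 * (deriv_factor_bound * K)"
proof -
  have *: "cmod (complex_of_real s * kernel_integral x j) \<le> 2 * (deriv_factor_bound * K)"
    if "j \<le> 3" and "0 \<le> s"
      and bound: "\<And>t. \<bar>t\<bar> \<le> 1 \<Longrightarrow> s * cmod (integrand_deriv j t) \<le> deriv_factor_bound * K"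
    for j s
  proof -
    have "0 \<le> deriv_factor_bound * K"
      using bound[of 0] \<open>0 \<le> s\<close> by (smt (verit) mult_nonneg_nonneg norm_ge_zero)
    moreover have "norm (complex_of_real s * (iexp (- t * x) * integrand_deriv j t)) \<le> deriv_factor_bound * K"
      if "t \<in> {-1..1}" for t
      using bound[of t] that \<open>0 \<le> s\<close> by (simp add: norm_mult abs_le_iff)
    ultimately have "cmod (complex_of_real s * kernel_integral x j)
        \<le> deriv_factor_bound * K * measure lborel {-1..1::real}"
      by (intro has_integral_bound_real[OF _ finite.emptyI has_integral_mult_right[OF
            kernel_integral_has_integral[OF \<open>j \<le> 3\<close>, where x = x]]]) auto
    then show ?thesis
      by simp
  qed
  show "j \<le> 2 \<Longrightarrow> cmod (phi k (1 / h)) * cmod (kernel_integral x j) \<le> 2 * (deriv_factor_bound * K)"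
    using *[of j "cmod (phi k (1 / h))"] norm_integrand_deriv_le(1) by (simp add: norm_mult)
  show "cmod (phi k (1 / h)) * (h * cmod (kernel_integral x 3)) \<le> 2 * (deriv_factor_bound * K)"
    using *[of 3 "cmod (phi k (1 / h)) * h"] norm_integrand_deriv_le(2) h_pos by (simp add: norm_mult ac_simps)
qed

lemma L_inverse_h_mult_le:
  assumes "0 \<le> y" "cmod (phi k (1 / h)) * y \<le> T"
  shows "h powr \<alpha> * L (1 / h) * y \<le> 2 / B * T"
proof -
  have "h powr \<alpha> * L (1 / h) * y \<le> 2 / B * (cmod (phi k (1 / h)) * y)"
    using mult_right_mono[OF L_inverse_h_le assms(1)] by simp
  also have "\<dots> \<le> 2 / B * T"
    using assms(2) B_pos by (intro mult_left_mono) auto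
  finally show ?thesis .
qed

lemma weighted_kernel_integral_le:
  fixes x :: real
  defines "a \<equiv> h powr \<alpha> * L (1 / h)" and "i0 \<equiv> cmod (kernel_integral x 0)"
    and "T \<equiv> 2 * (deriv_factor_bound * K)"
  shows "(a * i0 + a * h * (\<bar>x\<bar> * i0)) * max 1 (x\<^sup>2) \<le> 8 * deriv_factor_bound * K / B"
proof -
  have i0: "0 \<le> i0" "cmod (phi k (1 / h)) * i0 \<le> T"
    unfolding i0_def T_def using norm_kernel_integral_le(1)[of 0 x] by simp_all
  show ?thesis
  proof (cases "\<bar>x\<bar> \<le> 1")
    case True
    then have "max 1 (x\<^sup>2) = 1"
      by (simp add: abs_square_le_1)
    moreover have "a * h * (\<bar>x\<bar> * i0) \<le> a * i0"
      using mult_left_mono[OF mult_le_one[OF h_le_1 _ True], of "a * i0"] L_inverse_h_nonneg i0 h_pos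
      unfolding a_def by (simp add: ac_simps)
    ultimately show ?thesis
      using L_inverse_h_mult_le[OF i0] unfolding a_def T_def by simp
  next
    case False
    then have "\<bar>1\<bar> \<le> \<bar>x\<bar>"
      by simp
    then have "max 1 (x\<^sup>2) = x\<^sup>2"
      unfolding abs_le_square_iff by simp
    moreover have "\<bar>x\<bar> ^ 3 = x\<^sup>2 * \<bar>x\<bar>"
      by (simp add: power3_eq_cube power2_eq_square)
    ultimately have "(a * i0 + a * h * (\<bar>x\<bar> * i0)) * max 1 (x\<^sup>2)
        = a * (x\<^sup>2 * i0) + a * (h * (\<bar>x\<bar> ^ 3 * i0))"
      by (simp add: algebra_simps)
    also have "\<dots> \<le> 2 / B * T + 2 / B * T"
      using norm_kernel_integral_le(1)[of 2 x] norm_kernel_integral_le(2)[of x]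
        norm_kernel_integral[of 2 x] norm_kernel_integral[of 3 x] i0(1) h_pos
      unfolding a_def i0_def T_def by (intro add_mono L_inverse_h_mult_le) simp_all
    finally show ?thesis
      unfolding T_def by (simp add: ac_simps)
  qed
qed

lemma kernel_bound:
  "h powr \<alpha> * L (1 / h) * cmod (Kn W k h x)
      + h powr (\<alpha> + 1) * L (1 / h) * cmod (complex_of_real x * Kn W k h x)
    \<le> 8 * deriv_factor_bound * K / B * (1 / max 1 (x\<^sup>2))"
proof -
  define a where "a = h powr \<alpha> * L (1 / h)"
  define i0 where "i0 = cmod (kernel_integral x 0)"
  have "cmod (Kn W k h x) = i0 / (2 * pi)"
    unfolding Kn_eq_kernel_integral i0_def by (simp add: norm_mult norm_divide)
  moreover have "h powr (\<alpha> + 1) * L (1 / h) = a * h"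
    unfolding a_def using h_pos by (simp add: powr_add)
  ultimately have "h powr \<alpha> * L (1 / h) * cmod (Kn W k h x)
      + h powr (\<alpha> + 1) * L (1 / h) * cmod (complex_of_real x * Kn W k h x)
      = (a * i0 + a * h * (\<bar>x\<bar> * i0)) / (2 * pi)"
    unfolding a_def[symmetric] by (simp add: norm_mult add_divide_distrib)
  also have "\<dots> \<le> (a * i0 + a * h * (\<bar>x\<bar> * i0)) / 1"
    using L_inverse_h_nonneg h_pos pi_gt3 unfolding a_def i0_def by (intro divide_left_mono) auto
  also have "\<dots> \<le> 8 * deriv_factor_bound * K / B / max 1 (x\<^sup>2)"
    by (rule pos_le_divide_eq[THEN iffD2]) (use weighted_kernel_integral_le[of x] in \<open>simp_all add: a_def i0_def\<close>)
  finally show ?thesis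
    by simp
qed

end

context deconvolution_kernel
begin

lemma eventually_kernel_at_bandwidth:
  assumes R: "1 \<le> R"
    and K: "\<And>r t. R \<le> r \<Longrightarrow> \<bar>t\<bar> \<le> 1 \<Longrightarrow> cmod (phi k r) / cmod (phi k (r * t)) * (r / (1 + r * \<bar>t\<bar>))\<^sup>2 \<le> K"
    and d: "\<And>j u. j \<le> 3 \<Longrightarrow> cmod (D j u) \<le> d"
  shows "\<forall>\<^sub>F h in at_right 0. kernel_at_bandwidth k c \<alpha> L B W D h d K"
proof -
  have "\<forall>\<^sub>F v in at_top. (0 < L v \<and> L v \<le> (2 / B) * (v powr \<alpha> * cmod (phi k v))) \<and> R < v"
    by (rule eventually_conj[OF eventually_L_pos_le eventually_gt_at_top])
  from filterlim_iff[THEN iffD1, OF filterlim_inverse_at_top_right, rule_format, OF this]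
  have "\<forall>\<^sub>F h in at_right 0. (0 < L (1 / h) \<and> L (1 / h) \<le> (2 / B) * ((1 / h) powr \<alpha> * cmod (phi k (1 / h))))
      \<and> R < 1 / h"
    by (simp add: inverse_eq_divide)
  with eventually_at_right_less[of 0] show ?thesis
  proof eventually_elim
    case (elim h)
    have "h powr \<alpha> * L (1 / h) \<le> h powr \<alpha> * ((2 / B) * ((1 / h) powr \<alpha> * cmod (phi k (1 / h))))"
      using elim by (intro mult_left_mono) auto
    also have "\<dots> = (2 / B) * cmod (phi k (1 / h))"
      using elim by (simp add: powr_divide)
    finally have "h powr \<alpha> * L (1 / h) \<le> (2 / B) * cmod (phi k (1 / h))" .
    moreover have "1 < 1 / h"
      using R elim by linarith
    then have "h \<le> 1"
      using elim by (simp add: divide_less_eq)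
    ultimately show ?case
      unfolding kernel_at_bandwidth_def kernel_at_bandwidth_axioms_def
      using deconvolution_kernel_axioms elim R d K[of "1 / h"]
      by (auto simp: field_simps)
  qed
qed

theorem kernel_bound_eventually:
  "\<exists>C. \<forall>\<^sub>F h in at_right 0. \<forall>x.
     h powr \<alpha> * L (1 / h) * cmod (Kn W k h x)
       + h powr (\<alpha> + 1) * L (1 / h) * cmod (complex_of_real x * Kn W k h x)
     \<le> C * (1 / max 1 (x\<^sup>2))"
proof -
  obtain K R where "1 \<le> R" and "\<And>r t. R \<le> r \<Longrightarrow> \<bar>t\<bar> \<le> 1 \<Longrightarrow>
      cmod (phi k r) / cmod (phi k (r * t)) * (r / (1 + r * \<bar>t\<bar>))\<^sup>2 \<le> K"
    using phi_ratio_bound by blast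
  moreover obtain d where "\<And>j u. j \<le> 3 \<Longrightarrow> cmod (D j u) \<le> d"
    using D_bounded by blast
  ultimately have "\<forall>\<^sub>F h in at_right 0. kernel_at_bandwidth k c \<alpha> L B W D h d K"
    by (rule eventually_kernel_at_bandwidth)
  then show ?thesis
  proof (intro exI[of _ "8 * kernel_at_bandwidth.deriv_factor_bound c d * K / B"], elim eventually_mono, intro allI)
    fix h x
    assume "kernel_at_bandwidth k c \<alpha> L B W D h d K"
    from kernel_at_bandwidth.kernel_bound[OF this, of x]
    show "h powr \<alpha> * L (1 / h) * cmod (Kn W k h x)
        + h powr (\<alpha> + 1) * L (1 / h) * cmod (complex_of_real x * Kn W k h x)
      \<le> 8 * kernel_at_bandwidth.deriv_factor_bound c d * K / B * (1 / max 1 (x\<^sup>2))" .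
  qed
qed

end

theorem lemmaL5:
  fixes \<alpha> \<epsilon> B :: real and F :: "real measure" and W L :: "real \<Rightarrow> real" and p :: nat
  assumes F_prob: "prob_space F" and F_sets: "sets F = sets borel"
    and F_pos: "measure F {..0} = 0"
    and cond_i: "\<epsilon> > 0"
       "set_integrable lborel {0<..} (\<lambda>x. max 1 (\<bar>x\<bar> powr (2 + \<epsilon>)) * kfun \<alpha> F x)"
    and cond_ii: "kfun \<alpha> F 0 = \<alpha>" "2 < \<alpha>"
    and cond_iv: "\<exists>c. \<forall>u. cmod (phik (kfun \<alpha> F) u) \<le> c / (1 + \<bar>u\<bar>)
        \<and> cmod (vector_derivative (phik (kfun \<alpha> F)) (at u)) \<le> c / (1 + \<bar>u\<bar>)\<^sup>2
        \<and> cmod (vector_derivative (\<lambda>v. vector_derivative (phik (kfun \<alpha> F)) (at v)) (at u))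
            \<le> c / (1 + \<bar>u\<bar>)\<^sup>2"
    and cond_v: "integrable lborel W" "(LINT x|lborel. W x) = 1"
       "integrable lborel (\<lambda>x. \<bar>x\<bar> ^ (p + 1) * \<bar>W x\<bar>)"
       "\<And>l. 1 \<le> l \<Longrightarrow> l \<le> p \<Longrightarrow> (LINT x|lborel. x ^ l * W x) = 0"
       "\<And>u. \<bar>u\<bar> > 1 \<Longrightarrow> ftW W u = 0"
       "\<exists>D :: nat \<Rightarrow> real \<Rightarrow> complex. D 0 = ftW W
          \<and> (\<forall>j<3. \<forall>u. (D j has_vector_derivative D (Suc j) u) (at u))
          \<and> continuous_on UNIV (D 3)"
    and L_nonneg: "\<And>t. t > 1 \<Longrightarrow> L t \<ge> 0"
    and L_sv: "slowly_varying L"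
    and B_pos: "B > 0"
    and L_B: "((\<lambda>t. \<bar>t\<bar> powr \<alpha> * cmod (phi (kfun \<alpha> F) t) / L \<bar>t\<bar>) \<longlongrightarrow> B) at_infinity"
  shows "\<exists>C. \<forall>\<^sub>F h in at_right 0. \<forall>x::real.
     h powr \<alpha> * L (1 / h) * cmod (Kn W (kfun \<alpha> F) h x)
       + h powr (\<alpha> + 1) * L (1 / h) * cmod (complex_of_real x * Kn W (kfun \<alpha> F) h x)
     \<le> C * (1 / max 1 (x\<^sup>2))"
proof -
  obtain c where c: "\<And>u. cmod (phik (kfun \<alpha> F) u) \<le> c / (1 + \<bar>u\<bar>)
      \<and> cmod (vector_derivative (phik (kfun \<alpha> F)) (at u)) \<le> c / (1 + \<bar>u\<bar>)\<^sup>2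
      \<and> cmod (vector_derivative (\<lambda>v. vector_derivative (phik (kfun \<alpha> F)) (at v)) (at u))
          \<le> c / (1 + \<bar>u\<bar>)\<^sup>2"
    using cond_iv by blast
  obtain D where D: "D 0 = ftW W" "\<And>j u. j < 3 \<Longrightarrow> (D j has_vector_derivative D (Suc j) u) (at u)"
      "continuous_on UNIV (D 3)"
    using cond_v(6) by blast
  have k: "kfun \<alpha> F \<in> borel_measurable borel"
    using borel_measurable_kfun F_sets prob_space.finite_measure[OF F_prob] by blast
  have "0 \<le> kfun \<alpha> F x" for x
    using cond_ii(2) by (simp add: kfun_def)
  with k cond_i interpret tail_moments "kfun \<alpha> F"
    by unfold_locales (auto intro: set_integrable_power_le_2)
  interpret tail_Fourier_bounds "kfun \<alpha> F" c
    using c[unfolded vector_derivative_vector_derivative_phik, unfolded vector_derivative_phik]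
    by unfold_locales auto
  interpret deconvolution_kernel "kfun \<alpha> F" c \<alpha> L B W D
    using cond_ii(2) L_nonneg L_sv B_pos L_B D cond_v(5) by unfold_locales auto
  show ?thesis
    by (rule kernel_bound_eventually)
qed

end
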